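(* Let $L:\mathbb{R}^d\to\mathbb{R}^{\mathcal{Y}}_+$ be a polyhedral loss which indirectly elicits a finite property $\gamma:\Delta_{\mathcal{Y}}\rightrightarrows\mathcal{R}$. Then there exists $\epsilon_0>0$ such that for all $0<\epsilon\le\epsilon_0$, the general $\epsilon$-thickened link construction for $L,\gamma,\epsilon,\|\cdot\|_\infty$ produces a link that is separated (i.e., $\epsilon'$-separated for some $\epsilon'>0$) with respect to $\mathrm{prop}[L]$ and $\gamma$.
   Context: $\mathcal{Y}$ is a finite label set, $\Delta_{\mathcal{Y}}$ the simplex, $\mathbb{R}^{\mathcal{Y}}_+$ the nonnegative orthant. A property $\gamma:\Delta_{\mathcal{Y}}\rightrightarrows\mathcal{R}$ maps each $p$ to a nonempty subset of $\mathcal{R}$; finite if $\mathcal{R}$ finite; level sets $\gamma_r=\{p:r\in\gamma(p)\}$. $L:\mathbb{R}^d\to\mathbb{R}^{\mathcal{Y}}_+$ is polyhedral if each coordinate is a max of finitely many affine functions; it elicits $\Gamma=\mathrm{prop}[L]$, $\Gamma(p)=\arg\min_u\langle p,L(u)\rangle$. $L$ indirectly elicits $\gamma$ if for all $u$ there is $r$ with $\Gamma_u\subseteq\gamma_r$. General $\epsilon$-thickened link construction for $L,\gamma,\epsilon,\|\cdot\|$: let $\mathcal{U}=\{\Gamma(p):p\in\Delta_{\mathcal{Y}}\}$, $\Gamma_U=\{p:\Gamma(p)=U\}$, $R_U=\{r\in\mathcal{R}:\Gamma_U\subseteq\gamma_r\}$; initialize $\Psi(u)=\mathcal{R}$ for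 all $u$; for each $U\in\mathcal{U}$ and each $u$ with $\inf_{u^*\in U}\|u^*-u\|<\epsilon$ set $\Psi(u)\leftarrow\Psi(u)\cap R_U$; if $\Psi(u)\ne\emptyset$ for all $u$ the construction produces the links $\psi$ with $\psi(u)\in\Psi(u)$ for all $u$. A link $\psi:\mathbb{R}^d\to\mathcal{R}$ is $\epsilon'$-separated with respect to $\Gamma$ and $\gamma$ if $\psi(u)\notin\gamma(p)$ implies $\inf_{a\in\Gamma(p)}\|u-a\|_\infty\ge\epsilon'$. *)

theory Defs
  imports "HOL-Analysis.Analysis"
begin

definition prob_simplex :: "('y::finite \<Rightarrow> real) set" where
  "prob_simplex = {p. (\<forall>y. 0 \<le> p y) \<and> sum p UNIV = 1}"

definition dist_inf :: "real^'d::finite \<Rightarrow> real^'d \<Rightarrow> real" where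
  "dist_inf u v = Max (range (\<lambda>i. \<bar>u $ i - v $ i\<bar>))"

definition polyhedral_loss :: "(real^'d::finite \<Rightarrow> 'y \<Rightarrow> real) \<Rightarrow> bool" where
  "polyhedral_loss L \<longleftrightarrow> (\<forall>u y. 0 \<le> L u y) \<and>
     (\<forall>y. \<exists>A :: ((real^'d) \<times> real) set. finite A \<and> A \<noteq> {} \<and>
        (\<forall>u. L u y = Max ((\<lambda>(a,b). a \<bullet> u + b) ` A)))"

definition exp_loss :: "(real^'d::finite \<Rightarrow> 'y::finite \<Rightarrow> real) \<Rightarrow> ('y \<Rightarrow> real) \<Rightarrow> real^'d \<Rightarrow> real" where
  "exp_loss L p u = (\<Sum>y\<in>UNIV. p y * L u y)"

definition prop_L :: "(real^'d::finite \<Rightarrow> 'y::finite \<Rightarrow> real) \<Rightarrow> ('y \<Rightarrow> real) \<Rightarrow> (real^'d) set" where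
  "prop_L L p = {u. \<forall>v. exp_loss L p u \<le> exp_loss L p v}"

definition is_property :: "(('y::finite \<Rightarrow> real) \<Rightarrow> 'r set) \<Rightarrow> bool" where
  "is_property \<gamma> \<longleftrightarrow> (\<forall>p\<in>prob_simplex. \<gamma> p \<noteq> {})"

definition level_set :: "(('y::finite \<Rightarrow> real) \<Rightarrow> 'r set) \<Rightarrow> 'r \<Rightarrow> ('y \<Rightarrow> real) set" where
  "level_set \<gamma> r = {p\<in>prob_simplex. r \<in> \<gamma> p}"

definition prop_level :: "(real^'d::finite \<Rightarrow> 'y::finite \<Rightarrow> real) \<Rightarrow> real^'d \<Rightarrow> ('y \<Rightarrow> real) set" where
  "prop_level L u = {p\<in>prob_simplex. u \<in> prop_L L p}"

definition indirectly_elicits ::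
  "(real^'d::finite \<Rightarrow> 'y::finite \<Rightarrow> real) \<Rightarrow> (('y \<Rightarrow> real) \<Rightarrow> 'r set) \<Rightarrow> bool" where
  "indirectly_elicits L \<gamma> \<longleftrightarrow> (\<forall>u. \<exists>r. prop_level L u \<subseteq> level_set \<gamma> r)"

definition link_U :: "(real^'d::finite \<Rightarrow> 'y::finite \<Rightarrow> real) \<Rightarrow> (real^'d) set set" where
  "link_U L = {prop_L L p | p. p \<in> prob_simplex}"

definition link_GammaU :: "(real^'d::finite \<Rightarrow> 'y::finite \<Rightarrow> real) \<Rightarrow> (real^'d) set \<Rightarrow> ('y \<Rightarrow> real) set" where
  "link_GammaU L U = {p\<in>prob_simplex. prop_L L p = U}"

definition link_RU ::
  "(real^'d::finite \<Rightarrow> 'y::finite \<Rightarrow> real) \<Rightarrow> (('y \<Rightarrow> real) \<Rightarrow> 'r set) \<Rightarrow> (real^'d) set \<Rightarrow> 'r set" where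
  "link_RU L \<gamma> U = {r. link_GammaU L U \<subseteq> level_set \<gamma> r}"

definition link_Psi ::
  "(real^'d::finite \<Rightarrow> 'y::finite \<Rightarrow> real) \<Rightarrow> (('y \<Rightarrow> real) \<Rightarrow> 'r set) \<Rightarrow> real \<Rightarrow> real^'d \<Rightarrow> 'r set" where
  "link_Psi L \<gamma> \<epsilon> u = UNIV \<inter> (\<Inter>U\<in>{U\<in>link_U L. (INF ustar\<in>U. ereal (dist_inf ustar u)) < ereal \<epsilon>}. link_RU L \<gamma> U)"

definition produced_link ::
  "(real^'d::finite \<Rightarrow> 'y::finite \<Rightarrow> real) \<Rightarrow> (('y \<Rightarrow> real) \<Rightarrow> 'r set) \<Rightarrow> real \<Rightarrow> (real^'d \<Rightarrow> 'r) \<Rightarrow> bool" where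
  "produced_link L \<gamma> \<epsilon> \<psi> \<longleftrightarrow> (\<forall>u. link_Psi L \<gamma> \<epsilon> u \<noteq> {}) \<and> (\<forall>u. \<psi> u \<in> link_Psi L \<gamma> \<epsilon> u)"

definition eps_separated ::
  "(real^'d::finite \<Rightarrow> 'y::finite \<Rightarrow> real) \<Rightarrow> (('y \<Rightarrow> real) \<Rightarrow> 'r set) \<Rightarrow> (real^'d \<Rightarrow> 'r) \<Rightarrow> real \<Rightarrow> bool" where
  "eps_separated L \<gamma> \<psi> \<epsilon>' \<longleftrightarrow>
     (\<forall>u. \<forall>p\<in>prob_simplex. \<psi> u \<notin> \<gamma> p \<longrightarrow> (INF a\<in>prop_L L p. ereal (dist_inf u a)) \<ge> ereal \<epsilon>')"

end

theory Submission
  imports Defs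
begin

text \<open>Every level set of \<open>prop[L]\<close> is a union of the cells on which the set of active affine pieces
  of \<open>L\<close> is constant, so there are only finitely many. Take finitely many level sets \<open>U = prop[L](p\<^sub>U)\<close>
  with empty intersection. The maximum over \<open>U\<close> of the excess expected losses \<open>\<langle>p\<^sub>U, L(u)\<rangle> - min\<close> is a
  maximum of finitely many affine functions and positive everywhere, hence bounded below by some
  \<open>\<eta> > 0\<close> (a Farkas-type alternative). Since such maxima are Lipschitz, every point is then
  uniformly far from one of these level sets. Below the least such distance, the level sets within
  \<open>\<epsilon>\<close> of any point have a common point, whose report is admissible for all of them; and a link
  chosen from the construction is \<open>\<epsilon>\<close>-separated by design.\<close>

definition max_affine :: "('a::real_inner \<times> real) set \<Rightarrow> 'a \<Rightarrow> real" where
  "max_affine S u = Max ((\<lambda>(a, b). a \<bullet> u + b) ` S)"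

definition active_pieces :: "('a::real_inner \<times> real) set \<Rightarrow> 'a \<Rightarrow> ('a \<times> real) set" where
  "active_pieces S u = {x\<in>S. fst x \<bullet> u + snd x = max_affine S u}"

lemma max_affine_ge:
  assumes "finite S" "x \<in> S"
  shows "fst x \<bullet> u + snd x \<le> max_affine S u"
  unfolding max_affine_def using assms
  by (intro Max_ge) (auto intro!: rev_image_eqI[of x] split: prod.splits)

lemma max_affine_attained:
  assumes "finite S" "S \<noteq> {}"
  shows "\<exists>x\<in>S. fst x \<bullet> u + snd x = max_affine S u"
proof -
  have "max_affine S u \<in> (\<lambda>(a, b). a \<bullet> u + b) ` S"
    unfolding max_affine_def using assms by (intro Max_in) auto
  then obtain x where "x \<in> S" "max_affine S u = (\<lambda>(a, b). a \<bullet> u + b) x" by (rule imageE)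
  then show ?thesis by (intro bexI[of _ x]) (auto split: prod.splits)
qed

lemma max_affine_eqI:
  assumes "finite S" "x \<in> S" "fst x \<bullet> u + snd x = t" "\<And>x. x \<in> S \<Longrightarrow> fst x \<bullet> u + snd x \<le> t"
  shows "max_affine S u = t"
  unfolding max_affine_def using assms
  by (intro Max_eqI) (auto intro!: rev_image_eqI[of x] split: prod.splits)

lemma max_affine_minus_const:
  assumes "finite S" "S \<noteq> {}"
  shows "max_affine S u - c = max_affine ((\<lambda>(a, b). (a, b - c)) ` S) u"
proof -
  obtain x where "x \<in> S" "fst x \<bullet> u + snd x = max_affine S u"
    using max_affine_attained[OF assms] by blast
  then show ?thesis
    using assms max_affine_ge[OF assms(1)]
    by (intro max_affine_eqI[symmetric, of _ "(fst x, snd x - c)"]) (auto split: prod.splits)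
qed

lemma max_affine_sum:
  fixes w :: "'y::finite \<Rightarrow> real" and A :: "'y \<Rightarrow> ('a::real_inner \<times> real) set"
  assumes "\<And>y. 0 \<le> w y" "\<And>y. finite (A y)" "\<And>y. A y \<noteq> {}"
  shows "\<exists>S. finite S \<and> S \<noteq> {} \<and> (\<forall>u. (\<Sum>y\<in>UNIV. w y * max_affine (A y) u) = max_affine S u)"
proof -
  define combine where
    "combine \<sigma> = (\<Sum>y\<in>UNIV. w y *\<^sub>R fst (\<sigma> y), \<Sum>y\<in>UNIV. w y * snd (\<sigma> y))" for \<sigma> :: "'y \<Rightarrow> 'a \<times> real"
  define S where "S = combine ` (\<Pi>\<^sub>E y\<in>UNIV. A y)"
  have val: "fst (combine \<sigma>) \<bullet> u + snd (combine \<sigma>) = (\<Sum>y\<in>UNIV. w y * (fst (\<sigma> y) \<bullet> u + snd (\<sigma> y)))"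
    for \<sigma> u by (simp add: combine_def inner_sum_left distrib_left sum.distrib)
  have fin: "finite S" unfolding S_def using assms(2) by (simp add: finite_PiE)
  have "(\<Sum>y\<in>UNIV. w y * max_affine (A y) u) = max_affine S u" for u
  proof -
    have "\<forall>y. \<exists>x. x \<in> A y \<and> fst x \<bullet> u + snd x = max_affine (A y) u"
      using max_affine_attained[OF assms(2,3)] by blast
    then obtain \<sigma> where \<sigma>: "\<And>y. \<sigma> y \<in> A y \<and> fst (\<sigma> y) \<bullet> u + snd (\<sigma> y) = max_affine (A y) u"
      by metis
    have "restrict \<sigma> UNIV \<in> (\<Pi>\<^sub>E y\<in>UNIV. A y)" using \<sigma> by auto
    then have mem: "combine \<sigma> \<in> S" unfolding S_def by (metis image_eqI restrict_UNIV)
    show ?thesis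
    proof (rule max_affine_eqI[OF fin mem, symmetric])
      show "fst (combine \<sigma>) \<bullet> u + snd (combine \<sigma>) = (\<Sum>y\<in>UNIV. w y * max_affine (A y) u)"
        by (simp add: val \<sigma>)
    next
      fix x assume "x \<in> S"
      then obtain \<tau> where \<tau>: "\<tau> \<in> (\<Pi>\<^sub>E y\<in>UNIV. A y)" and x: "x = combine \<tau>"
        unfolding S_def by blast
      show "fst x \<bullet> u + snd x \<le> (\<Sum>y\<in>UNIV. w y * max_affine (A y) u)"
        unfolding x val using \<tau> assms(1,2)
        by (intro sum_mono mult_left_mono max_affine_ge) auto
    qed
  qed
  moreover have "S \<noteq> {}" unfolding S_def using assms(3) by (simp add: PiE_eq_empty_iff)
  ultimately show ?thesis using fin by blast
qed

lemma max_affine_le: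
  assumes "finite S" "S \<noteq> {}" "\<And>x. x \<in> S \<Longrightarrow> fst x \<bullet> u + snd x \<le> t"
  shows "max_affine S u \<le> t"
  using max_affine_attained[OF assms(1,2), of u] assms(3) by force

lemma max_affine_extrapolation:
  assumes "finite S" "S \<noteq> {}" "active_pieces S u \<subseteq> active_pieces S v"
  shows "\<forall>\<^sub>F s in at_right 0. max_affine S ((1 + s) *\<^sub>R u - s *\<^sub>R v)
           \<le> (1 + s) * max_affine S u - s * max_affine S v"
proof -
  have "\<forall>\<^sub>F s in at_right 0. \<forall>x\<in>S. fst x \<bullet> ((1 + s) *\<^sub>R u - s *\<^sub>R v) + snd x
          \<le> (1 + s) * max_affine S u - s * max_affine S v"
  proof (intro eventually_ball_finite[OF assms(1)] ballI)
    fix x assume x: "x \<in> S"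
    define g where "g = max_affine S u - (fst x \<bullet> u + snd x)"
    define h where "h = max_affine S v - (fst x \<bullet> v + snd x)"
    have gap: "fst x \<bullet> ((1 + s) *\<^sub>R u - s *\<^sub>R v) + snd x
        = (1 + s) * max_affine S u - s * max_affine S v - ((1 + s) * g - s * h)" for s
      by (simp add: g_def h_def inner_diff_right algebra_simps)
    show "\<forall>\<^sub>F s in at_right 0. fst x \<bullet> ((1 + s) *\<^sub>R u - s *\<^sub>R v) + snd x
            \<le> (1 + s) * max_affine S u - s * max_affine S v"
    proof (cases "x \<in> active_pieces S u")
      case True
      then have "g = 0" "h = 0" using assms(3) by (auto simp: g_def h_def active_pieces_def)
      then show ?thesis by (simp add: gap)
    next
      case False
      then have "0 < g" using x max_affine_ge[OF assms(1) x, of u] by (auto simp: g_def active_pieces_def)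
      have "((\<lambda>s. (1 + s) * g - s * h) \<longlongrightarrow> (1 + 0) * g - 0 * h) (at_right 0)"
        by (intro tendsto_intros)
      then have "\<forall>\<^sub>F s in at_right 0. 0 < (1 + s) * g - s * h"
        using \<open>0 < g\<close> by (auto dest: order_tendstoD(1))
      then show ?thesis by (rule eventually_mono) (simp add: gap)
    qed
  qed
  then show ?thesis
    by (rule eventually_mono) (rule max_affine_le[OF assms(1,2)], blast)
qed

lemma dist_inf_commute: "dist_inf u v = dist_inf v u"
  unfolding dist_inf_def by (simp add: abs_minus_commute)

lemma abs_component_le_dist_inf: "\<bar>u $ i - v $ i\<bar> \<le> dist_inf u v"
  unfolding dist_inf_def by (rule Max_ge) auto

lemma dist_inf_nonneg: "0 \<le> dist_inf u v"
  using abs_component_le_dist_inf[of u undefined v] by linarith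

lemma inner_le_dist_inf: "a \<bullet> (u - v) \<le> (\<Sum>i\<in>UNIV. \<bar>a $ i\<bar>) * dist_inf u v"
proof -
  have "a \<bullet> (u - v) = (\<Sum>i\<in>UNIV. a $ i * (u $ i - v $ i))" by (simp add: inner_vec_def)
  also have "\<dots> \<le> (\<Sum>i\<in>UNIV. \<bar>a $ i\<bar> * dist_inf u v)"
  proof (rule sum_mono)
    fix i
    have "a $ i * (u $ i - v $ i) \<le> \<bar>a $ i\<bar> * \<bar>u $ i - v $ i\<bar>"
      by (simp add: abs_mult[symmetric])
    also have "\<dots> \<le> \<bar>a $ i\<bar> * dist_inf u v"
      by (intro mult_left_mono abs_component_le_dist_inf) simp
    finally show "a $ i * (u $ i - v $ i) \<le> \<bar>a $ i\<bar> * dist_inf u v" .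
  qed
  finally show ?thesis by (simp add: sum_distrib_right)
qed

lemma max_affine_lipschitz:
  fixes S :: "((real^'n::finite) \<times> real) set"
  assumes "finite S" "S \<noteq> {}" "\<And>x. x \<in> S \<Longrightarrow> (\<Sum>i\<in>UNIV. \<bar>(fst x) $ i\<bar>) \<le> K"
  shows "max_affine S u \<le> max_affine S v + K * dist_inf u v"
proof -
  obtain x where x: "x \<in> S" "fst x \<bullet> u + snd x = max_affine S u"
    using max_affine_attained[OF assms(1,2)] by blast
  have "fst x \<bullet> (u - v) \<le> K * dist_inf u v"
    using inner_le_dist_inf[of "fst x" u v] assms(3)[OF x(1)]
    by (meson dist_inf_nonneg mult_right_mono order_trans)
  then show ?thesis
    using x max_affine_ge[OF assms(1) x(1), of v] by (simp add: inner_diff_right)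
qed

lemma uniformly_violated_if_cone_certificate:
  fixes S :: "('a::euclidean_space \<times> real) set"
  assumes "finite S" and "(0, 1) \<in> convex_cone hull insert (0, -1) S"
  shows "\<exists>\<eta>>0. \<forall>u. \<exists>x\<in>S. \<eta> \<le> fst x \<bullet> u + snd x"
proof -
  define S' where "S' = insert (0, -1) S"
  have fin: "finite S'" using assms(1) by (simp add: S'_def)
  have "(0, 1) \<noteq> (0 :: 'a \<times> real)" by (simp add: zero_prod_def)
  then obtain t y where t: "0 \<le> t" and y: "y \<in> convex hull S'" and ty: "(0, 1) = t *\<^sub>R y"
    using assms(2) unfolding S'_def convex_cone_hull_separate conic_hull_explicit by auto
  obtain c where c0: "\<forall>x\<in>S'. 0 \<le> c x" and c1: "sum c S' = 1" and cy: "(\<Sum>x\<in>S'. c x *\<^sub>R x) = y"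
    using y unfolding convex_hull_finite[OF fin] by auto
  have ts: "t * snd y = 1" and tf: "t *\<^sub>R fst y = 0" using ty by (simp_all add: prod_eq_iff)
  then have tpos: "0 < t" using t by (cases "t = 0") auto
  then have snd_y: "snd y = 1 / t" and fst_y: "fst y = 0" using ts tf by (auto simp: field_simps)
  show ?thesis
  proof (intro exI[of _ "1 / t"] conjI allI)
    show "0 < 1 / t" using tpos by simp
    fix u
    define M where "M = Max ((\<lambda>x. fst x \<bullet> u + snd x) ` S')"
    have "(\<Sum>x\<in>S'. c x * (fst x \<bullet> u + snd x)) = fst y \<bullet> u + snd y"
      by (simp add: cy[symmetric] fst_sum snd_sum inner_sum_left distrib_left sum.distrib)
    then have "1 / t = (\<Sum>x\<in>S'. c x * (fst x \<bullet> u + snd x))"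
      using fst_y snd_y by simp
    also have "\<dots> \<le> (\<Sum>x\<in>S'. c x * M)"
      using c0 fin by (intro sum_mono mult_left_mono) (auto simp: M_def)
    also have "\<dots> = M" using c1 by (simp add: sum_distrib_right[symmetric])
    finally have M: "1 / t \<le> M" .
    have "M \<in> (\<lambda>x. fst x \<bullet> u + snd x) ` S'"
      unfolding M_def using fin by (intro Max_in) (auto simp: S'_def)
    moreover have "0 < M" using M tpos by (meson divide_pos_pos less_le_trans zero_less_one)
    ultimately show "\<exists>x\<in>S. 1 / t \<le> fst x \<bullet> u + snd x"
      using M by (auto simp: S'_def)
  qed
qed

lemma feasible_if_no_cone_certificate:
  fixes S :: "('a::euclidean_space \<times> real) set"
  assumes "finite S" and "(0, 1) \<notin> convex_cone hull insert (0, -1) S"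
  shows "\<exists>u. \<forall>x\<in>S. fst x \<bullet> u + snd x \<le> 0"
proof -
  define C where "C = convex_cone hull insert (0, -1) S"
  have "closed C" "convex C"
    unfolding C_def using assms(1)
    by (auto intro: polyhedron_imp_closed polyhedron_convex_cone_hull convex_convex_cone_hull)
  then obtain a b where ab: "a \<bullet> (0, 1) < b" "\<forall>x\<in>C. b < a \<bullet> x"
    using separating_hyperplane_closed_point assms(2) unfolding C_def[symmetric] by blast
  have b: "b < 0" using ab(2) convex_cone_hull_contains_0[of "insert (0, -1) S"] by (auto simp: C_def)
  have nonneg: "0 \<le> a \<bullet> x" if "x \<in> C" for x
  proof (rule ccontr)
    assume neg: "\<not> 0 \<le> a \<bullet> x"
    have "(b / (a \<bullet> x)) *\<^sub>R x \<in> C"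
      using that neg b unfolding C_def by (intro convex_cone_hull_mul) (auto simp: divide_nonpos_neg)
    then show False using ab(2) neg by fastforce
  qed
  obtain w s where a: "a = (w, s)" by (cases a)
  have s: "s < 0" using ab(1) b by (simp add: a)
  have "fst x \<bullet> ((1 / s) *\<^sub>R w) + snd x \<le> 0" if "x \<in> S" for x
  proof -
    have "x \<in> C" using that unfolding C_def by (simp add: hull_inc)
    then have "0 \<le> w \<bullet> fst x + s * snd x" using nonneg[of x] by (cases x) (simp add: a)
    then show ?thesis using s by (simp add: inner_commute field_simps)
  qed
  then show ?thesis by blast
qed

text \<open>A Farkas-type alternative: either some conic combination of the affine functions and the constant
  \<open>-1\<close> is the constant \<open>1\<close>, which bounds their maximum below by a positive constant, or a separating
  hyperplane yields a common point where all of them are nonpositive.\<close>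
lemma uniformly_violated_if_infeasible:
  fixes S :: "('a::euclidean_space \<times> real) set"
  assumes "finite S" and "\<forall>u. \<exists>x\<in>S. 0 < fst x \<bullet> u + snd x"
  shows "\<exists>\<eta>>0. \<forall>u. \<exists>x\<in>S. \<eta> \<le> fst x \<bullet> u + snd x"
  using assms uniformly_violated_if_cone_certificate feasible_if_no_cone_certificate
  by (meson not_less)

lemma sublevel_sets_uniformly_apart:
  fixes S :: "'i \<Rightarrow> ((real^'n::finite) \<times> real) set"
  assumes "finite I" "\<And>i. i \<in> I \<Longrightarrow> finite (S i)" "\<And>i. i \<in> I \<Longrightarrow> S i \<noteq> {}"
    and "\<And>u. \<exists>i\<in>I. 0 < max_affine (S i) u"
  shows "\<exists>\<delta>>0. \<forall>u. \<exists>i\<in>I. \<forall>u'. max_affine (S i) u' \<le> 0 \<longrightarrow> \<delta> \<le> dist_inf u' u"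
proof -
  define T where "T = (\<Union>i\<in>I. S i)"
  have "finite T" unfolding T_def using assms(1,2) by simp
  have "\<exists>x\<in>T. 0 < fst x \<bullet> u + snd x" for u
  proof -
    obtain i where i: "i \<in> I" "0 < max_affine (S i) u" using assms(4) by blast
    moreover obtain x where "x \<in> S i" "fst x \<bullet> u + snd x = max_affine (S i) u"
      using max_affine_attained[OF assms(2,3)[OF i(1)]] by blast
    ultimately show ?thesis unfolding T_def by (metis UN_I)
  qed
  then obtain \<eta> where "0 < \<eta>" and \<eta>: "\<And>u. \<exists>x\<in>T. \<eta> \<le> fst x \<bullet> u + snd x"
    using uniformly_violated_if_infeasible[OF \<open>finite T\<close>] by blast
  define K where "K = 1 + (\<Sum>x\<in>T. \<Sum>j\<in>UNIV. \<bar>(fst x) $ j\<bar>)"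
  have "0 < K" unfolding K_def by (auto intro!: add_pos_nonneg sum_nonneg)
  have l1_le: "(\<Sum>j\<in>UNIV. \<bar>(fst x) $ j\<bar>) \<le> K" if "x \<in> S i" "i \<in> I" for x i
  proof -
    have "x \<in> T" using that unfolding T_def by blast
    then have "(\<Sum>j\<in>UNIV. \<bar>(fst x) $ j\<bar>) \<le> (\<Sum>x\<in>T. \<Sum>j\<in>UNIV. \<bar>(fst x) $ j\<bar>)"
      using \<open>finite T\<close> by (intro member_le_sum) (auto intro: sum_nonneg)
    then show ?thesis unfolding K_def by linarith
  qed
  have "\<exists>i\<in>I. \<forall>u'. max_affine (S i) u' \<le> 0 \<longrightarrow> \<eta> / K \<le> dist_inf u' u" for u
  proof -
    obtain i x where i: "i \<in> I" and x: "x \<in> S i" "\<eta> \<le> fst x \<bullet> u + snd x"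
      using \<eta> unfolding T_def by blast
    have "\<eta> / K \<le> dist_inf u' u" if "max_affine (S i) u' \<le> 0" for u'
    proof -
      have "\<eta> \<le> max_affine (S i) u" using max_affine_ge[OF assms(2)[OF i] x(1), of u] x(2) by linarith
      also have "\<dots> \<le> max_affine (S i) u' + K * dist_inf u u'"
        using assms(2,3)[OF i] l1_le[OF _ i] by (rule max_affine_lipschitz)
      also have "\<dots> \<le> K * dist_inf u' u" using that by (simp add: dist_inf_commute)
      finally show ?thesis using \<open>0 < K\<close> by (simp add: pos_divide_le_eq mult.commute)
    qed
    then show ?thesis using i by blast
  qed
  then show ?thesis using \<open>0 < \<eta>\<close> \<open>0 < K\<close> by (intro exI[of _ "\<eta> / K"]) simp
qed

definition near_sets :: "(real^'d::finite \<Rightarrow> 'y::finite \<Rightarrow> real) \<Rightarrow> real \<Rightarrow> real^'d \<Rightarrow> (real^'d) set set" where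
  "near_sets L \<epsilon> u = {U\<in>link_U L. (INF a\<in>U. ereal (dist_inf a u)) < ereal \<epsilon>}"

lemma link_Psi_eq_Inter_near_sets: "link_Psi L \<gamma> \<epsilon> u = \<Inter>(link_RU L \<gamma> ` near_sets L \<epsilon> u)"
  by (simp add: link_Psi_def near_sets_def)

text \<open>A point \<open>u'\<close> common to the level sets near \<open>u\<close> is optimal for every \<open>p\<close> in each of their
  \<open>\<Gamma>\<^sub>U\<close>, so the report that indirect elicitation assigns to \<open>u'\<close> lies in every \<open>R\<^sub>U\<close>.\<close>
lemma link_Psi_nonempty:
  assumes "indirectly_elicits L \<gamma>" and "\<Inter>(near_sets L \<epsilon> u) \<noteq> {}"
  shows "link_Psi L \<gamma> \<epsilon> u \<noteq> {}"
proof -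
  obtain u' where u': "u' \<in> \<Inter>(near_sets L \<epsilon> u)" using assms(2) by blast
  obtain r where r: "prop_level L u' \<subseteq> level_set \<gamma> r"
    using assms(1) by (auto simp: indirectly_elicits_def)
  have "r \<in> link_RU L \<gamma> U" if "U \<in> near_sets L \<epsilon> u" for U
    using u' that r by (auto simp: link_RU_def link_GammaU_def prop_level_def)
  then show ?thesis by (auto simp: link_Psi_eq_Inter_near_sets)
qed

lemma produced_link_eps_separated:
  assumes "produced_link L \<gamma> \<epsilon> \<psi>"
  shows "eps_separated L \<gamma> \<psi> \<epsilon>"
  unfolding eps_separated_def
proof (intro allI ballI impI)
  fix u p assume p: "p \<in> prob_simplex" and wrong: "\<psi> u \<notin> \<gamma> p"
  show "ereal \<epsilon> \<le> (INF a\<in>prop_L L p. ereal (dist_inf u a))"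
  proof (rule ccontr)
    assume "\<not> ereal \<epsilon> \<le> (INF a\<in>prop_L L p. ereal (dist_inf u a))"
    then have "prop_L L p \<in> near_sets L \<epsilon> u"
      using p by (auto simp: near_sets_def link_U_def dist_inf_commute not_le)
    then have "\<psi> u \<in> link_RU L \<gamma> (prop_L L p)"
      using assms by (auto simp: produced_link_def link_Psi_eq_Inter_near_sets)
    then show False using p wrong by (auto simp: link_RU_def link_GammaU_def level_set_def)
  qed
qed

lemma mem_prop_L_iff_le:
  assumes "u0 \<in> prop_L L p"
  shows "u \<in> prop_L L p \<longleftrightarrow> exp_loss L p u \<le> exp_loss L p u0"
  using assms unfolding prop_L_def by (auto intro: order_trans)

locale max_affine_loss =
  fixes L :: "real^'d::finite \<Rightarrow> 'y::finite \<Rightarrow> real"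
    and A :: "'y \<Rightarrow> ((real^'d) \<times> real) set"
  assumes finite_pieces: "finite (A y)"
    and pieces_nonempty: "A y \<noteq> {}"
    and loss_eq: "L u y = max_affine (A y) u"

lemma polyhedral_loss_imp_max_affine_loss:
  assumes "polyhedral_loss L"
  obtains A where "max_affine_loss L A"
proof -
  obtain A where "\<forall>y. finite (A y) \<and> A y \<noteq> {} \<and> (\<forall>u. L u y = max_affine (A y) u)"
    using assms unfolding polyhedral_loss_def max_affine_def by metis
  then have "max_affine_loss L A" by unfold_locales auto
  then show ?thesis by (rule that)
qed

context max_affine_loss
begin

text \<open>Past \<open>u\<close> on the ray from \<open>v\<close>, the pieces active at \<open>u\<close> remain maximal for a while, so the
  expected loss at \<open>(1 + s) u - s v\<close> is at most \<open>(1 + s) E(u) - s E(v)\<close>; minimality of \<open>E(u)\<close>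
  then forces \<open>E(v) \<le> E(u)\<close>.\<close>
lemma prop_L_if_active_pieces_subset:
  assumes "\<And>y. 0 \<le> p y" "u \<in> prop_L L p" "\<And>y. active_pieces (A y) u \<subseteq> active_pieces (A y) v"
  shows "v \<in> prop_L L p"
proof -
  have "\<forall>\<^sub>F s in at_right 0. 0 < s \<and> (\<forall>y. L ((1 + s) *\<^sub>R u - s *\<^sub>R v) y \<le> (1 + s) * L u y - s * L v y)"
    unfolding loss_eq
    using eventually_at_right_less
      max_affine_extrapolation[OF finite_pieces pieces_nonempty assms(3)]
    by (intro eventually_conj eventually_all_finite)
  then obtain s where s: "0 < s" and w: "\<And>y. L ((1 + s) *\<^sub>R u - s *\<^sub>R v) y \<le> (1 + s) * L u y - s * L v y"
    using eventually_happens'[OF trivial_limit_at_right_real] by blast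
  have "exp_loss L p u \<le> exp_loss L p ((1 + s) *\<^sub>R u - s *\<^sub>R v)"
    using assms(2) by (simp add: prop_L_def)
  also have "\<dots> \<le> (\<Sum>y\<in>UNIV. p y * ((1 + s) * L u y - s * L v y))"
    unfolding exp_loss_def using assms(1) w by (intro sum_mono mult_left_mono)
  also have "\<dots> = (1 + s) * exp_loss L p u - s * exp_loss L p v"
    by (simp add: exp_loss_def algebra_simps sum_subtractf sum_distrib_left)
  finally have "exp_loss L p v \<le> exp_loss L p u" using s by (simp add: algebra_simps)
  then show ?thesis using assms(2) by (auto simp: prop_L_def intro: order_trans)
qed

lemma finite_link_U: "finite (link_U L)"
proof -
  define pattern where "pattern u = (\<lambda>y. active_pieces (A y) u)" for u
  define Pats where "Pats = (\<Pi>\<^sub>E y\<in>UNIV. Pow (A y))"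
  have "finite Pats" unfolding Pats_def by (simp add: finite_PiE finite_pieces)
  have "U = {v. pattern v \<in> pattern ` U}" if "U \<in> link_U L" for U
  proof -
    obtain p where p: "p \<in> prob_simplex" "U = prop_L L p" using \<open>U \<in> link_U L\<close> by (auto simp: link_U_def)
    have "v \<in> U" if "pattern v = pattern u" "u \<in> U" for u v
    proof -
      have "active_pieces (A y) u \<subseteq> active_pieces (A y) v" for y
        using that(1) by (simp add: pattern_def fun_eq_iff)
      then show ?thesis
        using p that(2) prop_L_if_active_pieces_subset[of p u v] by (auto simp: prob_simplex_def)
    qed
    then show ?thesis by auto
  qed
  moreover have "pattern u \<in> Pats" for u by (auto simp: pattern_def Pats_def active_pieces_def)
  ultimately have "link_U L \<subseteq> (\<lambda>T. {v. pattern v \<in> T}) ` Pow Pats" by blast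
  then show ?thesis using \<open>finite Pats\<close> by (auto intro: finite_subset)
qed

lemma exp_loss_minus_max_affine:
  assumes "\<And>y. 0 \<le> p y"
  shows "\<exists>S. finite S \<and> S \<noteq> {} \<and> (\<forall>u. exp_loss L p u - c = max_affine S u)"
proof -
  have "\<exists>S. finite S \<and> S \<noteq> {} \<and> (\<forall>u. exp_loss L p u = max_affine S u)"
    using max_affine_sum[OF assms finite_pieces pieces_nonempty] by (simp add: exp_loss_def loss_eq)
  then obtain S where "finite S" "S \<noteq> {}" "\<And>u. exp_loss L p u = max_affine S u" by blast
  then show ?thesis
    by (intro exI[of _ "(\<lambda>(a, b). (a, b - c)) ` S"]) (simp add: max_affine_minus_const)
qed

lemma link_U_sublevel_max_affine:
  assumes "U \<in> link_U L" "U \<noteq> {}"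
  shows "\<exists>S. finite S \<and> S \<noteq> {} \<and> (\<forall>u. u \<in> U \<longleftrightarrow> max_affine S u \<le> 0)"
proof -
  obtain p where p: "p \<in> prob_simplex" and U: "prop_L L p = U"
    using assms(1) unfolding link_U_def by blast
  obtain u0 where u0: "u0 \<in> prop_L L p" using assms(2) U by blast
  have "\<And>y. 0 \<le> p y" using p by (simp add: prob_simplex_def)
  then obtain S where S: "finite S" "S \<noteq> {}" "\<And>u. exp_loss L p u - exp_loss L p u0 = max_affine S u"
    using exp_loss_minus_max_affine[of p "exp_loss L p u0"] by blast
  have "u \<in> U \<longleftrightarrow> max_affine S u \<le> 0" for u
    using mem_prop_L_iff_le[OF u0, of u] unfolding U by (simp add: S(3)[symmetric])
  then show ?thesis using S(1,2) by blast
qed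

lemma uniformly_apart_if_Inter_empty:
  assumes "I \<subseteq> link_U L" "finite I" "\<Inter>I = {}" "{} \<notin> I"
  shows "\<exists>\<delta>>0. \<forall>u. \<exists>U\<in>I. \<forall>u'\<in>U. \<delta> \<le> dist_inf u' u"
proof -
  have "\<forall>U\<in>I. \<exists>S. finite S \<and> S \<noteq> {} \<and> (\<forall>u. u \<in> U \<longleftrightarrow> max_affine S u \<le> 0)"
  proof
    fix U assume "U \<in> I"
    then show "\<exists>S. finite S \<and> S \<noteq> {} \<and> (\<forall>u. u \<in> U \<longleftrightarrow> max_affine S u \<le> 0)"
      using assms(1,4) by (intro link_U_sublevel_max_affine) auto
  qed
  from bchoice[OF this] obtain S
    where "\<forall>U\<in>I. finite (S U) \<and> S U \<noteq> {} \<and> (\<forall>u. u \<in> U \<longleftrightarrow> max_affine (S U) u \<le> 0)" ..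
  then have S_fin: "\<And>U. U \<in> I \<Longrightarrow> finite (S U)" and S_ne: "\<And>U. U \<in> I \<Longrightarrow> S U \<noteq> {}"
    and S_iff: "\<And>U u. U \<in> I \<Longrightarrow> u \<in> U \<longleftrightarrow> max_affine (S U) u \<le> 0"
    by auto
  have "\<exists>U\<in>I. 0 < max_affine (S U) u" for u
  proof -
    obtain U where U: "U \<in> I" "u \<notin> U" using assms(3) by blast
    then have "\<not> max_affine (S U) u \<le> 0" using S_iff[OF U(1), of u] by simp
    then show ?thesis using U(1) by (auto simp: not_le)
  qed
  then obtain \<delta> where "0 < \<delta>" and \<delta>: "\<forall>u. \<exists>U\<in>I. \<forall>u'. max_affine (S U) u' \<le> 0 \<longrightarrow> \<delta> \<le> dist_inf u' u"
    using sublevel_sets_uniformly_apart[where S = S, OF assms(2) S_fin S_ne] by blast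
  have "\<exists>U\<in>I. \<forall>u'\<in>U. \<delta> \<le> dist_inf u' u" for u
  proof -
    obtain U where U: "U \<in> I" "\<forall>u'. max_affine (S U) u' \<le> 0 \<longrightarrow> \<delta> \<le> dist_inf u' u"
      using \<delta> by blast
    have "\<delta> \<le> dist_inf u' u" if "u' \<in> U" for u'
      using U(2) S_iff[OF U(1), of u'] that by simp
    then show ?thesis using U(1) by blast
  qed
  then show ?thesis using \<open>0 < \<delta>\<close> by blast
qed

lemma Inter_near_sets_nonempty:
  "\<exists>\<epsilon>0>0. \<forall>\<epsilon> u. \<epsilon> \<le> \<epsilon>0 \<longrightarrow> \<Inter>(near_sets L \<epsilon> u) \<noteq> {}"
proof -
  define Bad where "Bad = {I. I \<subseteq> link_U L \<and> \<Inter>I = {} \<and> {} \<notin> I}"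
  have "finite Bad"
    using finite_link_U by (rule finite_subset[rotated, OF finite_Pow_iff[THEN iffD2]]) (auto simp: Bad_def)
  have "\<forall>I\<in>Bad. \<exists>\<delta>>0. \<forall>u. \<exists>U\<in>I. \<forall>u'\<in>U. \<delta> \<le> dist_inf u' u"
    using uniformly_apart_if_Inter_empty finite_link_U by (auto simp: Bad_def intro: finite_subset)
  from bchoice[OF this] obtain \<delta>
    where \<delta>: "\<forall>I\<in>Bad. 0 < \<delta> I \<and> (\<forall>u. \<exists>U\<in>I. \<forall>u'\<in>U. \<delta> I \<le> dist_inf u' u)" ..
  define \<epsilon>0 where "\<epsilon>0 = Min (insert 1 (\<delta> ` Bad))"
  have "0 < \<epsilon>0" using \<open>finite Bad\<close> \<delta> by (simp add: \<epsilon>0_def)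
  moreover have "\<Inter>(near_sets L \<epsilon> u) \<noteq> {}" if "\<epsilon> \<le> \<epsilon>0" for \<epsilon> u
  proof
    assume "\<Inter>(near_sets L \<epsilon> u) = {}"
    moreover have "{} \<notin> near_sets L \<epsilon> u" by (simp add: near_sets_def)
    ultimately have bad: "near_sets L \<epsilon> u \<in> Bad" by (auto simp: Bad_def near_sets_def)
    then obtain U where U: "U \<in> near_sets L \<epsilon> u" "\<forall>u'\<in>U. \<delta> (near_sets L \<epsilon> u) \<le> dist_inf u' u"
      using \<delta> by blast
    have "\<epsilon> \<le> \<delta> (near_sets L \<epsilon> u)"
      using that bad \<open>finite Bad\<close> by (auto simp: \<epsilon>0_def intro: order_trans)
    then have "ereal \<epsilon> \<le> (INF a\<in>U. ereal (dist_inf a u))"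
      using U(2) by (intro INF_greatest) auto
    then show False using U(1) by (auto simp: near_sets_def dest: leD)
  qed
  ultimately show ?thesis by blast
qed

end

theorem proposition7:
  fixes L :: "real^'d::finite \<Rightarrow> 'y::finite \<Rightarrow> real"
    and \<gamma> :: "('y \<Rightarrow> real) \<Rightarrow> 'r::finite set"
  assumes "polyhedral_loss L"
    and "is_property \<gamma>"
    and "indirectly_elicits L \<gamma>"
  shows "\<exists>\<epsilon>0>0. \<forall>\<epsilon>. 0 < \<epsilon> \<and> \<epsilon> \<le> \<epsilon>0 \<longrightarrow>
           (\<forall>u. link_Psi L \<gamma> \<epsilon> u \<noteq> {}) \<and>
           (\<forall>\<psi>. produced_link L \<gamma> \<epsilon> \<psi> \<longrightarrow> (\<exists>\<epsilon>'>0. eps_separated L \<gamma> \<psi> \<epsilon>'))"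
proof -
  obtain A where "max_affine_loss L A"
    using assms(1) by (rule polyhedral_loss_imp_max_affine_loss)
  then obtain \<epsilon>0 where "0 < \<epsilon>0" and near: "\<forall>\<epsilon> u. \<epsilon> \<le> \<epsilon>0 \<longrightarrow> \<Inter>(near_sets L \<epsilon> u) \<noteq> {}"
    using max_affine_loss.Inter_near_sets_nonempty by blast
  have "(\<forall>u. link_Psi L \<gamma> \<epsilon> u \<noteq> {}) \<and>
        (\<forall>\<psi>. produced_link L \<gamma> \<epsilon> \<psi> \<longrightarrow> (\<exists>\<epsilon>'>0. eps_separated L \<gamma> \<psi> \<epsilon>'))"
    if "0 < \<epsilon>" "\<epsilon> \<le> \<epsilon>0" for \<epsilon>
    using that near link_Psi_nonempty[OF assms(3)] produced_link_eps_separated by blast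
  then show ?thesis using \<open>0 < \<epsilon>0\<close> by blast
qed

end
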